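(* (Soundness) For every set $\Phi\subseteq\mathcal{L}_T$ and every $\alpha\in\mathcal{L}_T$: if $\Phi\vdash\alpha$ in SBTrust, then $\Phi\models\alpha$.
   Context: Propositional formulas: $\varphi::=\bot\mid p\mid\varphi\land\varphi\mid\varphi\lor\varphi\mid\varphi\to\varphi\mid\varphi\leftrightarrow\varphi\mid\neg\varphi$ over a countable set of variables. $\mathcal{L}_T$: $\alpha::=\varphi\mid\varphi\rightsquigarrow\varphi\mid B(\alpha)\mid\alpha*\alpha\mid\neg\alpha$ ($\varphi$ propositional, $*\in\{\land,\lor,\to,\leftrightarrow\}$). SBTrust is the Hilbert system (rule applications must yield formulas of $\mathcal{L}_T$; $\varphi,\psi,\chi,\varphi_i,\psi_i$ propositional; $\alpha,\beta\in\mathcal{L}_T$) with: all classical tautologies over $\mathcal{L}_T$ and Modus Ponens; $\mathbf{ID}$: $\varphi\rightsquigarrow\varphi$; $\mathbf{ST}$: $(\varphi\rightsquigarrow\bot)\to\neg\varphi$; $\mathbf{SH}$: $((\psi\land\chi)\rightsquigarrow\varphi)\to(\psi\rightsquigarrow(\chi\to\varphi))$; $\mathbf{LL+}$: $(\neg(\varphi\leftrightarrow\psi)\rightsquigarrow\bot)\to((\varphi\rightsquigarrow\chi)\leftrightarrow(\psi\rightsquigarrow\chi))$; rule $\mathbf{RCK}$: from $(\varphi_1\land\dots\land\varphi_n)\to\varphi_{n+1}$ infer $((\psi\rightsquigarrow\varphi_1)\land\dots\land(\psi\rightsquigarrow\varphi_n))\to(\psi\rightsquigarrow\varphi_{n+1})$;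 rule $\mathbf{S5_F}$: from $(\ell_1\land\dots\land\ell_n)\to\chi$ infer $(\ell_1\land\dots\land\ell_n)\to(\neg\chi\rightsquigarrow\bot)$, each $\ell_j$ being $\varphi_j\rightsquigarrow\psi_j$ or $\neg(\varphi_j\rightsquigarrow\psi_j)$, $\chi$ propositional; $\mathbf{KB}$: $B(\alpha\to\beta)\to(B(\alpha)\to B(\beta))$; $\mathbf{DB}$: $B(\alpha)\to\neg B(\neg\alpha)$; $\mathbf{4B}$: $B(\alpha)\to B(B(\alpha))$; necessitation for $B$: from $\alpha$ infer $B(\alpha)$. $\Phi\vdash\alpha$ is derivability from assumptions in the usual sense (necessitation applied only to theorems). A Trust model is $\mathcal{M}=\langle S,(S_i)_{i\in I},(\succeq_i)_{i\in I},R,V\rangle$: $R\subseteq S\times S$ serial and transitive; $(S_i)$ a partition of $S$; $\succeq_i\subseteq S_i\times S_i$ arbitrary; $V$ maps variables to subsets of $S$; and for each $i$ and propositional $\varphi$, $\|\varphi\|_i\neq\emptyset\Rightarrow\mathit{most}(\|\varphi\|_i)\neq\emptyset$, with $\|\varphi\|_i=\{v\in S_i:\mathcal{M},v\models\varphi\}$, $\mathit{most}(X)=\{s\in X:\forall v\in X\,(v\succeq_i s\Rightarrow s\succeq_i v)\}$. Truth: $s\models p$ iff $s\in V(p)$; Boolean clauses as usual; $s\models\varphi\rightsquigarrow\psi$ iff $\mathit{most}(\|\varphi\|_i)\subseteq\|\psi\|_i$ where $s\in S_i$; $s\models B(\alpha)$ iff $v\models\alpha$ for every $v$ with $sRv$.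 $\Phi\models\alpha$: in every Trust model, every state satisfying all of $\Phi$ satisfies $\alpha$. *)

theory Defs
  imports Main
begin

text \<open>One datatype for all formulas; propositional formulas are those without
  Cond (the conditional ~>) and Bel (the belief operator B).
  Propositional variables are natural numbers (a countable set).\<close>

datatype fm =
    Bot
  | Var nat
  | Conj fm fm
  | Disj fm fm
  | Imp fm fm
  | Iff fm fm
  | Neg fm
  | Cond fm fm
  | Bel fm

fun is_prop :: "fm \<Rightarrow> bool" where
  "is_prop Bot = True"
| "is_prop (Var p) = True"
| "is_prop (Conj a b) = (is_prop a \<and> is_prop b)"
| "is_prop (Disj a b) = (is_prop a \<and> is_prop b)"
| "is_prop (Imp a b) = (is_prop a \<and> is_prop b)"
| "is_prop (Iff a b) = (is_prop a \<and> is_prop b)"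
| "is_prop (Neg a) = is_prop a"
| "is_prop (Cond a b) = False"
| "is_prop (Bel a) = False"

fun in_LT :: "fm \<Rightarrow> bool" where
  "in_LT Bot = True"
| "in_LT (Var p) = True"
| "in_LT (Conj a b) = (in_LT a \<and> in_LT b)"
| "in_LT (Disj a b) = (in_LT a \<and> in_LT b)"
| "in_LT (Imp a b) = (in_LT a \<and> in_LT b)"
| "in_LT (Iff a b) = (in_LT a \<and> in_LT b)"
| "in_LT (Neg a) = in_LT a"
| "in_LT (Cond a b) = (is_prop a \<and> is_prop b)"
| "in_LT (Bel a) = in_LT a"

text \<open>Boolean evaluation treating variables, conditionals and belief formulas as atoms.\<close>
fun beval :: "(fm \<Rightarrow> bool) \<Rightarrow> fm \<Rightarrow> bool" where
  "beval v Bot = False"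
| "beval v (Var p) = v (Var p)"
| "beval v (Conj a b) = (beval v a \<and> beval v b)"
| "beval v (Disj a b) = (beval v a \<or> beval v b)"
| "beval v (Imp a b) = (beval v a \<longrightarrow> beval v b)"
| "beval v (Iff a b) = (beval v a \<longleftrightarrow> beval v b)"
| "beval v (Neg a) = (\<not> beval v a)"
| "beval v (Cond a b) = v (Cond a b)"
| "beval v (Bel a) = v (Bel a)"

definition tautology :: "fm \<Rightarrow> bool" where
  "tautology a \<longleftrightarrow> (\<forall>v. beval v a)"

fun conjs :: "fm list \<Rightarrow> fm" where
  "conjs [] = Bot"
| "conjs [x] = x"
| "conjs (x # y # xs) = Conj x (conjs (y # xs))"

definition is_lit :: "fm \<Rightarrow> bool" where
  "is_lit l \<longleftrightarrow> (\<exists>a b. is_prop a \<and> is_prop b \<and> (l = Cond a b \<or> l = Neg (Cond a b)))"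

inductive sbthm :: "fm \<Rightarrow> bool" where
  TAUT: "in_LT a \<Longrightarrow> tautology a \<Longrightarrow> sbthm a"
| MP: "sbthm (Imp a b) \<Longrightarrow> sbthm a \<Longrightarrow> sbthm b"
| ID: "is_prop p \<Longrightarrow> sbthm (Cond p p)"
| ST: "is_prop p \<Longrightarrow> sbthm (Imp (Cond p Bot) (Neg p))"
| SH: "is_prop p \<Longrightarrow> is_prop q \<Longrightarrow> is_prop c \<Longrightarrow>
       sbthm (Imp (Cond (Conj q c) p) (Cond q (Imp c p)))"
| LLplus: "is_prop p \<Longrightarrow> is_prop q \<Longrightarrow> is_prop c \<Longrightarrow>
       sbthm (Imp (Cond (Neg (Iff p q)) Bot) (Iff (Cond p c) (Cond q c)))"
| RCK: "q \<noteq> [] \<Longrightarrow> is_prop p \<Longrightarrow> (\<forall>x\<in>set q. is_prop x) \<Longrightarrow> is_prop c \<Longrightarrow>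
       sbthm (Imp (conjs q) c) \<Longrightarrow>
       sbthm (Imp (conjs (map (Cond p) q)) (Cond p c))"
| S5F: "ls \<noteq> [] \<Longrightarrow> (\<forall>l\<in>set ls. is_lit l) \<Longrightarrow> is_prop c \<Longrightarrow>
       sbthm (Imp (conjs ls) c) \<Longrightarrow>
       sbthm (Imp (conjs ls) (Cond (Neg c) Bot))"
| KB: "in_LT a \<Longrightarrow> in_LT b \<Longrightarrow> sbthm (Imp (Bel (Imp a b)) (Imp (Bel a) (Bel b)))"
| DB: "in_LT a \<Longrightarrow> sbthm (Imp (Bel a) (Neg (Bel (Neg a))))"
| FourB: "in_LT a \<Longrightarrow> sbthm (Imp (Bel a) (Bel (Bel a)))"
| NEC: "sbthm a \<Longrightarrow> sbthm (Bel a)"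

text \<open>Derivability from assumptions: theorems, assumptions, closed under modus ponens
  (the rules RCK, S5_F and necessitation are applied to theorems only).\<close>
inductive derivable :: "fm set \<Rightarrow> fm \<Rightarrow> bool" where
  D_thm: "sbthm a \<Longrightarrow> derivable \<Phi> a"
| D_hyp: "a \<in> \<Phi> \<Longrightarrow> derivable \<Phi> a"
| D_MP: "derivable \<Phi> (Imp a b) \<Longrightarrow> derivable \<Phi> a \<Longrightarrow> derivable \<Phi> b"

record ('s, 'i) tmodel =
  St :: "'s set"
  Idx :: "'i set"
  Cell :: "'i \<Rightarrow> 's set"
  Pref :: "'i \<Rightarrow> ('s \<times> 's) set"
  Rel :: "('s \<times> 's) set"
  Val :: "nat \<Rightarrow> 's set"

definition most :: "('s, 'i) tmodel \<Rightarrow> 'i \<Rightarrow> 's set \<Rightarrow> 's set" where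
  "most M i X = {s \<in> X. \<forall>v\<in>X. (v, s) \<in> Pref M i \<longrightarrow> (s, v) \<in> Pref M i}"

primrec sat :: "('s, 'i) tmodel \<Rightarrow> 's \<Rightarrow> fm \<Rightarrow> bool" where
  "sat M s Bot = False"
| "sat M s (Var p) = (s \<in> Val M p)"
| "sat M s (Conj a b) = (sat M s a \<and> sat M s b)"
| "sat M s (Disj a b) = (sat M s a \<or> sat M s b)"
| "sat M s (Imp a b) = (sat M s a \<longrightarrow> sat M s b)"
| "sat M s (Iff a b) = (sat M s a \<longleftrightarrow> sat M s b)"
| "sat M s (Neg a) = (\<not> sat M s a)"
| "sat M s (Cond a b) =
     (\<forall>i\<in>Idx M. s \<in> Cell M i \<longrightarrow>
        most M i {v \<in> Cell M i. sat M v a} \<subseteq> {v \<in> Cell M i. sat M v b})"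
| "sat M s (Bel a) = (\<forall>v. (s, v) \<in> Rel M \<longrightarrow> sat M v a)"

definition ext :: "('s, 'i) tmodel \<Rightarrow> 'i \<Rightarrow> fm \<Rightarrow> 's set" where
  "ext M i a = {v \<in> Cell M i. sat M v a}"

definition trust_model :: "('s, 'i) tmodel \<Rightarrow> bool" where
  "trust_model M \<longleftrightarrow>
     Rel M \<subseteq> St M \<times> St M \<and>
     (\<forall>s\<in>St M. \<exists>v. (s, v) \<in> Rel M) \<and>
     trans (Rel M) \<and>
     (\<forall>i\<in>Idx M. Cell M i \<noteq> {}) \<and>
     (\<forall>i\<in>Idx M. \<forall>j\<in>Idx M. i \<noteq> j \<longrightarrow> Cell M i \<inter> Cell M j = {}) \<and>
     (\<Union>i\<in>Idx M. Cell M i) = St M \<and>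
     (\<forall>i\<in>Idx M. Pref M i \<subseteq> Cell M i \<times> Cell M i) \<and>
     (\<forall>p. Val M p \<subseteq> St M) \<and>
     (\<forall>i\<in>Idx M. \<forall>a. is_prop a \<longrightarrow> ext M i a \<noteq> {} \<longrightarrow> most M i (ext M i a) \<noteq> {})"

end

theory Submission
  imports Defs
begin

text \<open>Since the cells partition the states, a conditional
  is evaluated in the unique cell of the current state, so its truth value is constant on cells;
  the conditional axioms are then properties of the selection function \<open>most\<close> restricted to one
  cell, where smoothness says that \<open>most\<close> of a nonempty propositional extension is nonempty.
  The belief axioms are those of KD4 and hold because the accessibility relation is serial
  and transitive.\<close>

definition valid :: "('s, 'i) tmodel \<Rightarrow> fm \<Rightarrow> bool" where
  "valid M a \<longleftrightarrow> (\<forall>s\<in>St M. sat M s a)"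

lemma sat_iff_beval: "sat M s a \<longleftrightarrow> beval (sat M s) a"
  by (induction a) auto

lemma sat_conjs: "xs \<noteq> [] \<Longrightarrow> sat M s (conjs xs) \<longleftrightarrow> (\<forall>x\<in>set xs. sat M s x)"
  by (induction xs rule: conjs.induct) auto

lemma most_subset: "most M i X \<subseteq> X"
  unfolding most_def by blast

lemma most_restrict: "v \<in> most M i X \<Longrightarrow> v \<in> Y \<Longrightarrow> Y \<subseteq> X \<Longrightarrow> v \<in> most M i Y"
  unfolding most_def by blast

lemma ext_subset_Cell: "ext M i a \<subseteq> Cell M i"
  unfolding ext_def by blast

lemma trust_model_validI:
  assumes "trust_model M" "\<And>i s. i \<in> Idx M \<Longrightarrow> s \<in> Cell M i \<Longrightarrow> sat M s a"
  shows "valid M a"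
proof -
  have "St M = (\<Union>i\<in>Idx M. Cell M i)"
    using assms(1) unfolding trust_model_def by blast
  then show ?thesis
    using assms(2) unfolding valid_def by blast
qed

lemma trust_model_Cell_subset_St:
  "trust_model M \<Longrightarrow> i \<in> Idx M \<Longrightarrow> Cell M i \<subseteq> St M"
  unfolding trust_model_def by blast

lemma trust_model_most_ext_empty_iff:
  assumes "trust_model M" "i \<in> Idx M" "is_prop a"
  shows "most M i (ext M i a) = {} \<longleftrightarrow> ext M i a = {}"
proof -
  have "ext M i a \<noteq> {} \<longrightarrow> most M i (ext M i a) \<noteq> {}"
    using assms unfolding trust_model_def by blast
  then show ?thesis
    using most_subset[of M i "ext M i a"] by blast
qed

lemma trust_model_sat_Cond:
  assumes "trust_model M" "i \<in> Idx M" "s \<in> Cell M i"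
  shows "sat M s (Cond a b) \<longleftrightarrow> most M i (ext M i a) \<subseteq> ext M i b"
proof -
  have disjoint: "\<forall>i\<in>Idx M. \<forall>j\<in>Idx M. i \<noteq> j \<longrightarrow> Cell M i \<inter> Cell M j = {}"
    using assms(1) unfolding trust_model_def by blast
  have "j = i" if "j \<in> Idx M" "s \<in> Cell M j" for j
    using disjoint assms(2,3) that by blast
  then have "sat M s (Cond a b) \<longleftrightarrow>
      most M i {v \<in> Cell M i. sat M v a} \<subseteq> {v \<in> Cell M i. sat M v b}"
    unfolding sat.simps using assms(2,3) by blast
  then show ?thesis
    unfolding ext_def .
qed

lemma trust_model_sat_Cond_Bot:
  assumes "trust_model M" "i \<in> Idx M" "s \<in> Cell M i" "is_prop a"
  shows "sat M s (Cond a Bot) \<longleftrightarrow> ext M i a = {}"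
proof -
  have "sat M s (Cond a Bot) \<longleftrightarrow> most M i (ext M i a) \<subseteq> ext M i Bot"
    using trust_model_sat_Cond[OF assms(1-3)] .
  also have "\<dots> \<longleftrightarrow> ext M i a = {}"
    using trust_model_most_ext_empty_iff[OF assms(1,2,4)] unfolding ext_def by simp
  finally show ?thesis .
qed

lemma trust_model_sat_lit_Cell:
  assumes "trust_model M" "i \<in> Idx M" "s \<in> Cell M i" "v \<in> Cell M i" "is_lit l"
  shows "sat M v l \<longleftrightarrow> sat M s l"
  using assms(5) trust_model_sat_Cond[OF assms(1,2,3)] trust_model_sat_Cond[OF assms(1,2,4)]
  unfolding is_lit_def by auto

lemma valid_SH:
  assumes "trust_model M"
  shows "valid M (Imp (Cond (Conj q c) p) (Cond q (Imp c p)))"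
proof (rule trust_model_validI[OF assms])
  fix i s assume i: "i \<in> Idx M" "s \<in> Cell M i"
  have "most M i (ext M i q) \<subseteq> ext M i (Imp c p)"
    if qc: "most M i (ext M i (Conj q c)) \<subseteq> ext M i p"
  proof
    fix v assume v: "v \<in> most M i (ext M i q)"
    then have v_q: "v \<in> ext M i q"
      by (rule subsetD[OF most_subset])
    show "v \<in> ext M i (Imp c p)"
    proof (cases "sat M v c")
      case True
      have "ext M i (Conj q c) \<subseteq> ext M i q"
        unfolding ext_def by auto
      moreover have "v \<in> ext M i (Conj q c)"
        using v_q True unfolding ext_def by simp
      ultimately have "v \<in> ext M i p"
        using most_restrict[OF v] qc by blast
      then show ?thesis
        unfolding ext_def by simp
    next
      case False
      with v_q show ?thesis
        unfolding ext_def by simp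
    qed
  qed
  then show "sat M s (Imp (Cond (Conj q c) p) (Cond q (Imp c p)))"
    unfolding sat.simps(5) trust_model_sat_Cond[OF assms i] by (rule impI)
qed

lemma valid_LLplus:
  assumes "trust_model M" "is_prop p" "is_prop q"
  shows "valid M (Imp (Cond (Neg (Iff p q)) Bot) (Iff (Cond p c) (Cond q c)))"
proof (rule trust_model_validI[OF assms(1)])
  fix i s assume i: "i \<in> Idx M" "s \<in> Cell M i"
  have np: "is_prop (Neg (Iff p q))"
    using assms(2,3) by simp
  have "ext M i p = ext M i q" if "ext M i (Neg (Iff p q)) = {}"
    using that unfolding ext_def by auto
  then show "sat M s (Imp (Cond (Neg (Iff p q)) Bot) (Iff (Cond p c) (Cond q c)))"
    unfolding sat.simps(5,6) trust_model_sat_Cond_Bot[OF assms(1) i np]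
    unfolding trust_model_sat_Cond[OF assms(1) i] by simp
qed

lemma valid_RCK:
  assumes "trust_model M" "q \<noteq> []" "valid M (Imp (conjs q) c)"
  shows "valid M (Imp (conjs (map (Cond p) q)) (Cond p c))"
proof (rule trust_model_validI[OF assms(1)], unfold sat.simps(5), rule impI)
  fix i s assume i: "i \<in> Idx M" "s \<in> Cell M i"
    and conds: "sat M s (conjs (map (Cond p) q))"
  have "sat M s (Cond p x)" if "x \<in> set q" for x
    using conds that assms(2) by (simp add: sat_conjs del: sat.simps)
  then have most_in: "most M i (ext M i p) \<subseteq> ext M i x" if "x \<in> set q" for x
    using that unfolding trust_model_sat_Cond[OF assms(1) i] .
  have "most M i (ext M i p) \<subseteq> ext M i c"
  proof
    fix v assume v: "v \<in> most M i (ext M i p)"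
    then have v_Cell: "v \<in> Cell M i"
      using subsetD[OF most_subset v] ext_subset_Cell[of M i p] by blast
    then have "v \<in> St M"
      using trust_model_Cell_subset_St[OF assms(1) i(1)] by blast
    moreover have "sat M v x" if "x \<in> set q" for x
      using subsetD[OF most_in[OF that] v] unfolding ext_def by simp
    then have "sat M v (conjs q)"
      by (simp add: sat_conjs[OF assms(2)])
    ultimately have "sat M v c"
      using assms(3) unfolding valid_def by simp
    with v_Cell show "v \<in> ext M i c"
      unfolding ext_def by simp
  qed
  then show "sat M s (Cond p c)"
    unfolding trust_model_sat_Cond[OF assms(1) i] .
qed

lemma valid_S5F:
  assumes "trust_model M" "ls \<noteq> []" "\<forall>l\<in>set ls. is_lit l" "valid M (Imp (conjs ls) c)"
  shows "valid M (Imp (conjs ls) (Cond (Neg c) Bot))"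
proof (rule trust_model_validI[OF assms(1)], unfold sat.simps(5), rule impI)
  fix i s assume i: "i \<in> Idx M" "s \<in> Cell M i" and lits: "sat M s (conjs ls)"
  have "sat M v c" if v: "v \<in> Cell M i" for v
  proof -
    have "sat M v (conjs ls)"
      using lits assms(3) trust_model_sat_lit_Cell[OF assms(1) i v]
      unfolding sat_conjs[OF assms(2)] by blast
    moreover have "v \<in> St M"
      using v trust_model_Cell_subset_St[OF assms(1) i(1)] by blast
    ultimately show ?thesis
      using assms(4) unfolding valid_def by auto
  qed
  then have "ext M i (Neg c) = {}"
    unfolding ext_def by simp
  then have "most M i (ext M i (Neg c)) \<subseteq> ext M i Bot"
    using most_subset[of M i "ext M i (Neg c)"] by simp
  then show "sat M s (Cond (Neg c) Bot)"
    unfolding trust_model_sat_Cond[OF assms(1) i] .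
qed

theorem sbthm_valid:
  assumes M: "trust_model M"
  shows "sbthm a \<Longrightarrow> valid M a"
proof (induction rule: sbthm.induct)
  case (TAUT a)
  then show ?case
    using sat_iff_beval unfolding valid_def tautology_def by metis
next
  case (MP a b)
  then show ?case
    unfolding valid_def by auto
next
  case (ID p)
  show ?case
  proof (rule trust_model_validI[OF M])
    fix i s assume i: "i \<in> Idx M" "s \<in> Cell M i"
    show "sat M s (Cond p p)"
      unfolding trust_model_sat_Cond[OF M i] by (rule most_subset)
  qed
next
  case (ST p)
  show ?case
  proof (rule trust_model_validI[OF M])
    fix i s assume i: "i \<in> Idx M" "s \<in> Cell M i"
    show "sat M s (Imp (Cond p Bot) (Neg p))"
      using i unfolding sat.simps(5,7) trust_model_sat_Cond_Bot[OF M i ST] ext_def by blast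
  qed
next
  case (SH p q c)
  show ?case using valid_SH[OF M] .
next
  case (LLplus p q c)
  then show ?case using valid_LLplus[OF M] by simp
next
  case (RCK q p c)
  show ?case using valid_RCK[OF M RCK(1) RCK.IH] .
next
  case (S5F ls c)
  show ?case using valid_S5F[OF M S5F(1,2) S5F.IH] .
next
  case (KB a b)
  show ?case
    unfolding valid_def by simp
next
  case (DB a)
  have "\<forall>s\<in>St M. \<exists>v. (s, v) \<in> Rel M"
    using M unfolding trust_model_def by (elim conjE)
  then show ?case
    unfolding valid_def by auto
next
  case (FourB a)
  have "trans (Rel M)"
    using M unfolding trust_model_def by (elim conjE)
  then show ?case
    unfolding valid_def trans_def by simp
next
  case (NEC a)
  have "Rel M \<subseteq> St M \<times> St M"
    using M unfolding trust_model_def by (elim conjE)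
  with NEC.IH show ?case
    unfolding valid_def by auto
qed

lemma derivable_sound:
  assumes "trust_model M" "derivable \<Phi> a" "s \<in> St M" "\<forall>\<beta>\<in>\<Phi>. sat M s \<beta>"
  shows "sat M s a"
  using assms(2,4)
proof (induction rule: derivable.induct)
  case (D_thm a)
  have "valid M a"
    using sbthm_valid[OF assms(1) D_thm.hyps] .
  then show ?case
    using assms(3) unfolding valid_def by blast
qed auto

theorem theorem4:
  fixes \<Phi> :: "fm set" and \<alpha> :: fm
    and M :: "('s, 'i) tmodel" and s :: 's
  assumes "\<forall>\<beta>\<in>\<Phi>. in_LT \<beta>"
    and "in_LT \<alpha>"
    and "derivable \<Phi> \<alpha>"
    and "trust_model M"
    and "s \<in> St M"
    and "\<forall>\<beta>\<in>\<Phi>. sat M s \<beta>"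
  shows "sat M s \<alpha>"
  using derivable_sound[OF assms(4,3,5,6)] .

end
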